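(* Let $n\ge3$ and $1<\alpha\le\sqrt2$. Then the set of minimal vectors of $D_n^\alpha$ is $S(D_n^\alpha)=\{\pm\mathbf{b}_1,\dots,\pm\mathbf{b}_n\}$. In particular $\lambda_1^2(D_n^\alpha)=2$ and $D_n^\alpha$ is generic well-rounded.
   Context: Let $\mathbf{e}_1,\dots,\mathbf{e}_n$ be the standard basis of $\mathbb{R}^n$. For $n\ge3$, $1\le\alpha\le\sqrt2$ and $\overline\alpha:=\sqrt{2-\alpha^2}$, $D_n^\alpha$ is the lattice with basis $\mathbf{b}_1=\alpha\mathbf{e}_1+\overline\alpha\mathbf{e}_2$, $\mathbf{b}_2=\alpha\mathbf{e}_2+\overline\alpha\mathbf{e}_3$, $\mathbf{b}_3=\overline\alpha\mathbf{e}_1+\alpha\mathbf{e}_3$, $\mathbf{b}_4=\overline\alpha\mathbf{e}_3-\alpha\mathbf{e}_4$, and $\mathbf{b}_k=\overline\alpha\mathbf{e}_{k-1}-\alpha\mathbf{e}_k$ for $5\le k\le n$. $S(\Lambda)$ is the set of vectors of $\Lambda$ of norm $\lambda_1(\Lambda)=\min_{0\ne\mathbf{x}\in\Lambda}\|\mathbf{x}\|$. A lattice in $\mathbb{R}^n$ is generic well-rounded if $S(\Lambda)$ spans $\mathbb{R}^n$ and $|S(\Lambda)|=2n$. *)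

theory Defs
  imports Complex_Main
begin

text \<open>Vectors of R^n are represented as functions nat => real supported on {1..n};
  coordinate j is the j-th standard coordinate (1-based, as in the paper).\<close>

definition in_Rn :: "nat \<Rightarrow> (nat \<Rightarrow> real) \<Rightarrow> bool" where
  "in_Rn n x \<longleftrightarrow> (\<forall>j. j \<notin> {1..n} \<longrightarrow> x j = 0)"

definition vnorm :: "nat \<Rightarrow> (nat \<Rightarrow> real) \<Rightarrow> real" where
  "vnorm n x = sqrt (\<Sum>j=1..n. (x j)^2)"

definition stdb :: "nat \<Rightarrow> (nat \<Rightarrow> real)" where
  "stdb i = (\<lambda>j. if j = i then 1 else 0)"

definition abar :: "real \<Rightarrow> real" where
  "abar \<alpha> = sqrt (2 - \<alpha>^2)"

definition Db :: "real \<Rightarrow> nat \<Rightarrow> (nat \<Rightarrow> real)" where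
  "Db \<alpha> k = (\<lambda>j.
     if k = 1 then \<alpha> * stdb 1 j + abar \<alpha> * stdb 2 j
     else if k = 2 then \<alpha> * stdb 2 j + abar \<alpha> * stdb 3 j
     else if k = 3 then abar \<alpha> * stdb 1 j + \<alpha> * stdb 3 j
     else if k = 4 then abar \<alpha> * stdb 3 j - \<alpha> * stdb 4 j
     else abar \<alpha> * stdb (k - 1) j - \<alpha> * stdb k j)"

definition lattice_gen :: "nat \<Rightarrow> (nat \<Rightarrow> nat \<Rightarrow> real) \<Rightarrow> (nat \<Rightarrow> real) set" where
  "lattice_gen n v = {x. \<exists>c :: nat \<Rightarrow> int. x = (\<lambda>j. \<Sum>k=1..n. of_int (c k) * v k j)}"

definition D_lattice :: "nat \<Rightarrow> real \<Rightarrow> (nat \<Rightarrow> real) set" where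
  "D_lattice n \<alpha> = lattice_gen n (Db \<alpha>)"

definition lambda1 :: "nat \<Rightarrow> (nat \<Rightarrow> real) set \<Rightarrow> real" where
  "lambda1 n L = Inf {vnorm n x | x. x \<in> L \<and> x \<noteq> (\<lambda>_. 0)}"

definition minvecs :: "nat \<Rightarrow> (nat \<Rightarrow> real) set \<Rightarrow> (nat \<Rightarrow> real) set" where
  "minvecs n L = {x \<in> L. x \<noteq> (\<lambda>_. 0) \<and> vnorm n x = lambda1 n L}"

definition spans_Rn :: "nat \<Rightarrow> (nat \<Rightarrow> real) set \<Rightarrow> bool" where
  "spans_Rn n S \<longleftrightarrow> (\<forall>x. in_Rn n x \<longrightarrow>
     (\<exists>F c. finite F \<and> F \<subseteq> S \<and> x = (\<lambda>j. \<Sum>v\<in>F. c v * v j)))"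

definition generic_WR :: "nat \<Rightarrow> (nat \<Rightarrow> real) set \<Rightarrow> bool" where
  "generic_WR n L \<longleftrightarrow> spans_Rn n (minvecs n L) \<and> card (minvecs n L) = 2 * n"

end

theory Submission
  imports Defs "HOL-Library.Function_Algebras"
begin

text \<open>Write a lattice vector as \<open>x = \<Sum>k. c\<^sub>k b\<^sub>k\<close> with integer \<open>c\<close> and put \<open>\<beta> = abar \<alpha>\<close>.
  Its squared norm is a quadratic form in \<open>c\<close> whose coefficients are \<open>\<alpha>\<^sup>2\<close>, \<open>\<alpha>\<beta>\<close> and \<open>\<beta>\<^sup>2\<close>;
  using \<open>\<alpha>\<^sup>2 + \<beta>\<^sup>2 = 2\<close> it becomes \<open>2 (1 - \<alpha>\<beta>) \<Sum>k. c\<^sub>k\<^sup>2 + (\<alpha>\<beta> - \<beta>\<^sup>2) Q1 c + \<beta>\<^sup>2 Q2 c\<close>,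
  where \<open>Q1\<close> and \<open>Q2\<close> are sums of squares of integer linear forms that are even and
  positive definite, hence at least 2 for \<open>c \<noteq> 0\<close>. For \<open>1 < \<alpha> \<le> \<surd>2\<close> we have
  \<open>\<beta>\<^sup>2 \<le> \<alpha>\<beta> < 1\<close>, so \<open>\<parallel>x\<parallel>\<^sup>2 \<ge> 2 + 2 (1 - \<alpha>\<beta>) (\<Sum>k. c\<^sub>k\<^sup>2 - 1)\<close>, with value 2 only for \<open>c = \<plusminus>e\<^sub>k\<close>.
  The \<open>2n\<close> vectors \<open>\<plusminus>b\<^sub>k\<close> are distinct because the entry \<open>\<plusminus>\<alpha>\<close> of \<open>b\<^sub>k\<close> in coordinate \<open>k\<close>
  dominates all other entries in that coordinate, and they span because \<open>b\<^sub>1, b\<^sub>2, b\<^sub>3\<close> form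
  an invertible circulant block while \<open>b\<^sub>k\<close> recovers \<open>e\<^sub>k\<close> from \<open>e\<^sub>k\<^sub>-\<^sub>1\<close> for \<open>k \<ge> 4\<close>.\<close>

lemma sq_le_two_if_le_sqrt2: "0 \<le> \<alpha> \<Longrightarrow> \<alpha> \<le> sqrt 2 \<Longrightarrow> \<alpha>\<^sup>2 \<le> 2"
  by (metis real_sqrt_le_iff real_sqrt_unique)

lemma abar_nonneg: "\<alpha>\<^sup>2 \<le> 2 \<Longrightarrow> 0 \<le> abar \<alpha>"
  by (simp add: abar_def)

lemma alpha_sq_add_abar_sq: "\<alpha>\<^sup>2 \<le> 2 \<Longrightarrow> \<alpha>\<^sup>2 + (abar \<alpha>)\<^sup>2 = 2"
  by (simp add: abar_def)

lemma abar_less_one: "1 < \<alpha> \<Longrightarrow> \<alpha>\<^sup>2 \<le> 2 \<Longrightarrow> abar \<alpha> < 1"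
  by (simp add: abar_def)

lemma alpha_mult_abar_less_one:
  assumes "1 < \<alpha>" "\<alpha>\<^sup>2 \<le> 2"
  shows "\<alpha> * abar \<alpha> < 1"
proof -
  have "0 < (\<alpha> - abar \<alpha>)\<^sup>2"
    using abar_less_one[OF assms] assms(1) by simp
  then show ?thesis
    using alpha_sq_add_abar_sq[OF assms(2)] by (simp add: power2_eq_square algebra_simps)
qed

lemma abar_sq_le_alpha_mult_abar:
  assumes "1 < \<alpha>" "\<alpha>\<^sup>2 \<le> 2"
  shows "(abar \<alpha>)\<^sup>2 \<le> \<alpha> * abar \<alpha>"
proof -
  have "abar \<alpha> \<le> \<alpha>"
    using abar_less_one[OF assms] assms(1) by simp
  then show ?thesis
    using mult_right_mono abar_nonneg[OF assms(2)] by (simp add: power2_eq_square)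
qed

lemma nat_le4_cases: obtains "k = 0" | "k = 1" | "k = 2" | "k = 3" | "k = 4" | "5 \<le> (k::nat)"
  by linarith

lemma Db_col1: "Db \<alpha> k 1 = (if k = 1 then \<alpha> else 0) + (if k = 3 then abar \<alpha> else 0)"
  by (cases k rule: nat_le4_cases) (auto simp add: Db_def stdb_def)

lemma Db_col2: "Db \<alpha> k 2 = (if k = 1 then abar \<alpha> else 0) + (if k = 2 then \<alpha> else 0)"
  by (cases k rule: nat_le4_cases) (auto simp add: Db_def stdb_def)

lemma Db_col3:
  "Db \<alpha> k 3 = (if k = 2 then abar \<alpha> else 0) + (if k = 3 then \<alpha> else 0) + (if k = 4 then abar \<alpha> else 0)"
  by (cases k rule: nat_le4_cases) (auto simp add: Db_def stdb_def)

lemma Db_col_ge4: "4 \<le> j \<Longrightarrow> Db \<alpha> k j = (if k = Suc j then abar \<alpha> else 0) + (if k = j then - \<alpha> else 0)"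
  by (cases k rule: nat_le4_cases) (auto simp add: Db_def stdb_def)

definition Db_comb :: "nat \<Rightarrow> real \<Rightarrow> (nat \<Rightarrow> real) \<Rightarrow> nat \<Rightarrow> real" where
  "Db_comb n \<alpha> r = (\<lambda>j. \<Sum>k=1..n. r k * Db \<alpha> k j)"

lemma sum_mult_delta_vanishing:
  fixes m n p :: nat
  assumes "\<forall>k>n. r k = 0" "m \<le> p"
  shows "(\<Sum>k=m..n. r k * (if k = p then u else 0)) = r p * (u :: 'a::comm_semiring_1)"
  using assms by (cases "p \<le> n") (simp_all add: if_distrib[of "\<lambda>x. _ * x"] sum.delta cong: if_cong)

text \<open>Coefficients are normalised to vanish beyond \<open>n\<close>, so that \<open>r (Suc n)\<close> may appear in the
  formula for the last coordinate.\<close>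

context
  fixes n :: nat and r :: "nat \<Rightarrow> real"
  assumes n: "3 \<le> n" and vanish: "\<forall>k>n. r k = 0"
begin

lemma Db_comb_1: "Db_comb n \<alpha> r 1 = \<alpha> * r 1 + abar \<alpha> * r 3"
  unfolding Db_comb_def Db_col1 distrib_left sum.distrib
  by (simp add: sum_mult_delta_vanishing vanish mult.commute)

lemma Db_comb_2: "Db_comb n \<alpha> r 2 = abar \<alpha> * r 1 + \<alpha> * r 2"
  unfolding Db_comb_def Db_col2 distrib_left sum.distrib
  by (simp add: sum_mult_delta_vanishing vanish mult.commute)

lemma Db_comb_3: "Db_comb n \<alpha> r 3 = abar \<alpha> * r 2 + \<alpha> * r 3 + abar \<alpha> * r 4"
  unfolding Db_comb_def Db_col3 distrib_left sum.distrib
  by (simp add: sum_mult_delta_vanishing vanish mult.commute)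

lemma Db_comb_ge4: "4 \<le> j \<Longrightarrow> Db_comb n \<alpha> r j = abar \<alpha> * r (Suc j) - \<alpha> * r j"
  unfolding Db_comb_def Db_col_ge4 distrib_left sum.distrib
  by (simp add: sum_mult_delta_vanishing vanish mult.commute)

end

section \<open>The norm decomposition\<close>

text \<open>Writing the squared norm of \<open>Db_comb n \<alpha> r\<close> as \<open>\<alpha>\<^sup>2 A r + \<alpha>\<beta> B r + \<beta>\<^sup>2 C r\<close>, one has
  \<open>A r = \<Sum>k. r\<^sub>k\<^sup>2\<close>, \<open>Q1 = 2 A + B\<close> and \<open>Q2 = A + B + C\<close> (the squared norm for \<open>\<alpha> = \<beta> = 1\<close>).\<close>

definition tail_form :: "nat \<Rightarrow> (nat \<Rightarrow> 'a::comm_ring_1) \<Rightarrow> 'a" where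
  "tail_form n r = (\<Sum>j=4..n. (r j - r (Suc j))\<^sup>2)"

definition Q1 :: "nat \<Rightarrow> (nat \<Rightarrow> 'a::comm_ring_1) \<Rightarrow> 'a" where
  "Q1 n r = (r 1 + r 2 + r 3)\<^sup>2 + (r 1)\<^sup>2 + (r 2)\<^sup>2 + (r 3 + r 4)\<^sup>2 + tail_form n r"

definition Q2 :: "nat \<Rightarrow> (nat \<Rightarrow> 'a::comm_ring_1) \<Rightarrow> 'a" where
  "Q2 n r = (r 1 + r 3)\<^sup>2 + (r 1 + r 2)\<^sup>2 + (r 2 + r 3 + r 4)\<^sup>2 + tail_form n r"

lemma sum_atLeast1_split3:
  fixes f :: "nat \<Rightarrow> 'a::comm_monoid_add"
  assumes "3 \<le> n"
  shows "(\<Sum>j=1..n. f j) = f 1 + f 2 + f 3 + (\<Sum>j=4..n. f j)"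
proof -
  have "{1..n} = {1, 2, 3} \<union> {4..n}"
    using assms by auto
  then show ?thesis
    by (simp add: sum.union_disjoint add.assoc)
qed

text \<open>Here \<open>S\<close> and \<open>W\<close> stand for \<open>\<Sum>j=4..n. r\<^sub>j\<^sup>2\<close> and \<open>tail_form n r\<close>.\<close>

lemma Db_comb_norm_identity:
  fixes a b r1 r2 r3 r4 S W :: real
  assumes "a\<^sup>2 + b\<^sup>2 = 2"
  shows "(a * r1 + b * r3)\<^sup>2 + (b * r1 + a * r2)\<^sup>2 + (b * r2 + a * r3 + b * r4)\<^sup>2
      + (a * b * W + (a\<^sup>2 - a * b) * S + (b\<^sup>2 - a * b) * (S - r4\<^sup>2))
    = 2 * (1 - a * b) * (r1\<^sup>2 + r2\<^sup>2 + r3\<^sup>2 + S)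
      + (a * b - b\<^sup>2) * ((r1 + r2 + r3)\<^sup>2 + r1\<^sup>2 + r2\<^sup>2 + (r3 + r4)\<^sup>2 + W)
      + b\<^sup>2 * ((r1 + r3)\<^sup>2 + (r1 + r2)\<^sup>2 + (r2 + r3 + r4)\<^sup>2 + W)"
proof -
  have "(a * r1 + b * r3)\<^sup>2 + (b * r1 + a * r2)\<^sup>2 + (b * r2 + a * r3 + b * r4)\<^sup>2
      + (a * b * W + (a\<^sup>2 - a * b) * S + (b\<^sup>2 - a * b) * (S - r4\<^sup>2))
    = 2 * (1 - a * b) * (r1\<^sup>2 + r2\<^sup>2 + r3\<^sup>2 + S)
      + (a * b - b\<^sup>2) * ((r1 + r2 + r3)\<^sup>2 + r1\<^sup>2 + r2\<^sup>2 + (r3 + r4)\<^sup>2 + W)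
      + b\<^sup>2 * ((r1 + r3)\<^sup>2 + (r1 + r2)\<^sup>2 + (r2 + r3 + r4)\<^sup>2 + W)
      + (a\<^sup>2 + b\<^sup>2 - 2) * (r1\<^sup>2 + r2\<^sup>2 + r3\<^sup>2 + S)"
    by algebra
  then show ?thesis
    using assms by simp
qed

lemma sum_sq_Db_comb:
  fixes r :: "nat \<Rightarrow> real"
  assumes n: "3 \<le> n" and vanish: "\<forall>k>n. r k = 0" and \<alpha>: "\<alpha>\<^sup>2 \<le> 2"
  defines "b \<equiv> abar \<alpha>"
  shows "(\<Sum>j=1..n. (Db_comb n \<alpha> r j)\<^sup>2)
    = 2 * (1 - \<alpha> * b) * (\<Sum>k=1..n. (r k)\<^sup>2) + (\<alpha> * b - b\<^sup>2) * Q1 n r + b\<^sup>2 * Q2 n r"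
proof -
  define S where "S = (\<Sum>j=4..n. (r j)\<^sup>2)"
  have shifted: "(\<Sum>j=4..n. (r (Suc j))\<^sup>2) = S - (r 4)\<^sup>2"
    using sum_Suc_diff[of 4 n "\<lambda>j. (r j)\<^sup>2"] n vanish
    by (simp add: S_def sum_subtractf)
  have tail: "(\<Sum>j=4..n. (Db_comb n \<alpha> r j)\<^sup>2)
      = \<alpha> * b * tail_form n r + (\<alpha>\<^sup>2 - \<alpha> * b) * S + (b\<^sup>2 - \<alpha> * b) * (S - (r 4)\<^sup>2)"
  proof -
    have "(\<Sum>j=4..n. (Db_comb n \<alpha> r j)\<^sup>2) = (\<Sum>j=4..n. \<alpha> * b * (r j - r (Suc j))\<^sup>2
        + (\<alpha>\<^sup>2 - \<alpha> * b) * (r j)\<^sup>2 + (b\<^sup>2 - \<alpha> * b) * (r (Suc j))\<^sup>2)"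
      by (intro sum.cong refl)
        (simp add: Db_comb_ge4[OF n vanish] b_def power2_eq_square algebra_simps)
    also have "\<dots> = \<alpha> * b * tail_form n r + (\<alpha>\<^sup>2 - \<alpha> * b) * S
        + (b\<^sup>2 - \<alpha> * b) * (\<Sum>j=4..n. (r (Suc j))\<^sup>2)"
      by (simp add: tail_form_def S_def sum.distrib sum_distrib_left)
    finally show ?thesis
      by (simp only: shifted)
  qed
  have "(\<Sum>j=1..n. (Db_comb n \<alpha> r j)\<^sup>2) = (Db_comb n \<alpha> r 1)\<^sup>2 + (Db_comb n \<alpha> r 2)\<^sup>2
      + (Db_comb n \<alpha> r 3)\<^sup>2 + (\<Sum>j=4..n. (Db_comb n \<alpha> r j)\<^sup>2)"
    by (rule sum_atLeast1_split3[OF n])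
  also have "\<dots> = (\<alpha> * r 1 + b * r 3)\<^sup>2 + (b * r 1 + \<alpha> * r 2)\<^sup>2
      + (b * r 2 + \<alpha> * r 3 + b * r 4)\<^sup>2 + (\<Sum>j=4..n. (Db_comb n \<alpha> r j)\<^sup>2)"
    unfolding Db_comb_1[OF n vanish] Db_comb_2[OF n vanish] Db_comb_3[OF n vanish] b_def ..
  also have "\<dots> = 2 * (1 - \<alpha> * b) * ((r 1)\<^sup>2 + (r 2)\<^sup>2 + (r 3)\<^sup>2 + S)
      + (\<alpha> * b - b\<^sup>2) * Q1 n r + b\<^sup>2 * Q2 n r"
    unfolding tail Q1_def Q2_def
    by (rule Db_comb_norm_identity) (use alpha_sq_add_abar_sq[OF \<alpha>] in \<open>simp add: b_def\<close>)
  also have "(r 1)\<^sup>2 + (r 2)\<^sup>2 + (r 3)\<^sup>2 + S = (\<Sum>k=1..n. (r k)\<^sup>2)"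
    unfolding S_def by (rule sum_atLeast1_split3[OF n, symmetric])
  finally show ?thesis .
qed

section \<open>Parity and definiteness of the integral forms\<close>

lemma even_power2_minus_self: "even ((x::int)\<^sup>2 - x)"
  by simp

lemma tail_form_nonneg: "0 \<le> tail_form n (r :: nat \<Rightarrow> 'a::linordered_idom)"
  unfolding tail_form_def by (simp add: sum_nonneg)

lemma Q1_nonneg: "0 \<le> Q1 n (r :: nat \<Rightarrow> 'a::linordered_idom)"
  unfolding Q1_def by (simp add: tail_form_nonneg)

lemma Q2_nonneg: "0 \<le> Q2 n (r :: nat \<Rightarrow> 'a::linordered_idom)"
  unfolding Q2_def by (simp add: tail_form_nonneg)

lemma sum_diff_Suc_telescope:
  fixes r :: "nat \<Rightarrow> 'a::ab_group_add"
  assumes "m \<le> Suc n" "r (Suc n) = 0"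
  shows "(\<Sum>j=m..n. r j - r (Suc j)) = r m"
  using sum_Suc_diff[of m n "\<lambda>j. - r j"] assms by simp

lemma tail_form_eq_0_imp:
  fixes r :: "nat \<Rightarrow> 'a::linordered_idom"
  assumes vanish: "\<forall>k>n. r k = 0" and "tail_form n r = 0" and "4 \<le> k"
  shows "r k = 0"
proof (cases "k \<le> n")
  case True
  have "\<forall>j\<in>{4..n}. (r j - r (Suc j))\<^sup>2 = 0"
    using assms(2) by (subst (asm) tail_form_def, subst (asm) sum_nonneg_eq_0_iff) auto
  then have "(\<Sum>j=k..n. r j - r (Suc j)) = 0"
    using \<open>4 \<le> k\<close> by (intro sum.neutral) auto
  then show ?thesis
    using sum_diff_Suc_telescope[of k n r] True vanish by simp
qed (use vanish in simp)

context
  fixes n :: nat and r :: "nat \<Rightarrow> 'a::linordered_idom"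
  assumes n: "3 \<le> n" and vanish: "\<forall>k>n. r k = 0"
begin

lemma Q1_eq_0_imp:
  assumes "Q1 n r = 0" "0 < k"
  shows "r k = 0"
proof -
  have "tail_form n r = 0" "r 1 = 0" "r 2 = 0" "r 3 + r 4 = 0" "r 1 + r 2 + r 3 = 0"
    using assms(1) tail_form_nonneg[of n r] by (simp_all add: Q1_def add_nonneg_eq_0_iff)
  then show ?thesis
    using tail_form_eq_0_imp[OF vanish, of k] assms(2) by (cases "k \<le> 3") (auto simp: numeral_eq_Suc le_Suc_eq)
qed

lemma Q2_eq_0_imp:
  assumes "Q2 n r = 0" "0 < k"
  shows "r k = 0"
proof -
  have "tail_form n r = 0" "r 1 + r 3 = 0" "r 1 + r 2 = 0" "r 2 + r 3 + r 4 = 0"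
    using assms(1) tail_form_nonneg[of n r] by (simp_all add: Q2_def add_nonneg_eq_0_iff)
  moreover have "r 4 = 0"
    using tail_form_eq_0_imp[OF vanish] calculation(1) by simp
  ultimately show ?thesis
    using tail_form_eq_0_imp[OF vanish, of k] assms(2) by (cases "k \<le> 3") (auto simp: numeral_eq_Suc le_Suc_eq)
qed

end

lemma int_ge_2_if_even_pos: "even (x::int) \<Longrightarrow> 0 < x \<Longrightarrow> 2 \<le> x"
  by (auto elim!: evenE)

context
  fixes n :: nat and c :: "nat \<Rightarrow> int"
  assumes n: "3 \<le> n" and vanish: "\<forall>k>n. c k = 0"
begin

lemma even_tail_form_minus: "even (tail_form n c - c 4)"
proof -
  have "tail_form n c - c 4 = (\<Sum>j=4..n. (c j - c (Suc j))\<^sup>2 - (c j - c (Suc j)))"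
    using sum_diff_Suc_telescope[of 4 n c] n vanish
    by (simp add: tail_form_def sum_subtractf)
  also have "even \<dots>"
    by (intro dvd_sum even_power2_minus_self)
  finally show ?thesis .
qed

lemma even_Q1: "even (Q1 n c)"
proof -
  have "Q1 n c = ((c 1 + c 2 + c 3)\<^sup>2 - (c 1 + c 2 + c 3)) + ((c 1)\<^sup>2 - c 1) + ((c 2)\<^sup>2 - c 2)
      + ((c 3 + c 4)\<^sup>2 - (c 3 + c 4)) + (tail_form n c - c 4) + 2 * (c 1 + c 2 + c 3 + c 4)"
    unfolding Q1_def by algebra
  then show ?thesis
    by (simp only:) (intro dvd_add even_power2_minus_self even_tail_form_minus; simp)
qed

lemma even_Q2: "even (Q2 n c)"
proof -
  have "Q2 n c = ((c 1 + c 3)\<^sup>2 - (c 1 + c 3)) + ((c 1 + c 2)\<^sup>2 - (c 1 + c 2))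
      + ((c 2 + c 3 + c 4)\<^sup>2 - (c 2 + c 3 + c 4)) + (tail_form n c - c 4) + 2 * (c 1 + c 2 + c 3 + c 4)"
    unfolding Q2_def by algebra
  then show ?thesis
    by (simp only:) (intro dvd_add even_power2_minus_self even_tail_form_minus; simp)
qed

lemma Q1_ge_2: "0 < k \<Longrightarrow> c k \<noteq> 0 \<Longrightarrow> 2 \<le> Q1 n c"
  using Q1_eq_0_imp[OF n vanish] Q1_nonneg[of n c] even_Q1
  by (metis int_ge_2_if_even_pos order_le_less)

lemma Q2_ge_2: "0 < k \<Longrightarrow> c k \<noteq> 0 \<Longrightarrow> 2 \<le> Q2 n c"
  using Q2_eq_0_imp[OF n vanish] Q2_nonneg[of n c] even_Q2
  by (metis int_ge_2_if_even_pos order_le_less)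

end

lemma of_int_Q1: "of_int (Q1 n c) = Q1 n (\<lambda>k. of_int (c k))"
  by (simp add: Q1_def tail_form_def)

lemma of_int_Q2: "of_int (Q2 n c) = Q2 n (\<lambda>k. of_int (c k))"
  by (simp add: Q2_def tail_form_def)

lemma sum_sq_Db_comb_int_ge:
  fixes c :: "nat \<Rightarrow> int"
  assumes n: "3 \<le> n" and vanish: "\<forall>k>n. c k = 0" and \<alpha>: "1 < \<alpha>" "\<alpha>\<^sup>2 \<le> 2"
    and k: "0 < k" "c k \<noteq> 0"
  shows "2 + 2 * (1 - \<alpha> * abar \<alpha>) * ((\<Sum>k=1..n. (of_int (c k))\<^sup>2) - 1)
    \<le> (\<Sum>j=1..n. (Db_comb n \<alpha> (\<lambda>k. of_int (c k)) j)\<^sup>2)"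
proof -
  define b where "b = abar \<alpha>"
  define r where "r = (\<lambda>k. real_of_int (c k))"
  define N where "N = (\<Sum>k=1..n. (r k)\<^sup>2)"
  have "(\<alpha> * b - b\<^sup>2) * 2 \<le> (\<alpha> * b - b\<^sup>2) * Q1 n r"
    using Q1_ge_2[OF n vanish k] abar_sq_le_alpha_mult_abar[OF \<alpha>]
    by (intro mult_left_mono) (simp_all flip: of_int_Q1 add: b_def r_def)
  moreover have "b\<^sup>2 * 2 \<le> b\<^sup>2 * Q2 n r"
    using Q2_ge_2[OF n vanish k] by (intro mult_left_mono) (simp_all flip: of_int_Q2 add: r_def)
  ultimately have "2 + 2 * (1 - \<alpha> * b) * (N - 1) \<le> 2 * (1 - \<alpha> * b) * N + (\<alpha> * b - b\<^sup>2) * Q1 n r + b\<^sup>2 * Q2 n r"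
    by (simp add: algebra_simps)
  also have "\<dots> = (\<Sum>j=1..n. (Db_comb n \<alpha> r j)\<^sup>2)"
    using sum_sq_Db_comb[OF n _ \<alpha>(2), of r] vanish by (simp add: b_def N_def r_def)
  finally show ?thesis
    by (simp add: b_def N_def r_def)
qed

lemma vnorm_sq: "(vnorm n x)\<^sup>2 = (\<Sum>j=1..n. (x j)\<^sup>2)"
  unfolding vnorm_def by (simp add: sum_nonneg)

lemma vnorm_nonneg: "0 \<le> vnorm n x"
  unfolding vnorm_def by (simp add: sum_nonneg)

lemma Db_comb_cong: "(\<And>k. k \<in> {1..n} \<Longrightarrow> r k = r' k) \<Longrightarrow> Db_comb n \<alpha> r = Db_comb n \<alpha> r'"
  unfolding Db_comb_def by (intro ext sum.cong) auto

lemma Db_comb_delta: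
  assumes "k \<in> {1..n}"
  shows "Db_comb n \<alpha> (\<lambda>i. if i = k then u else 0) = (\<lambda>j. u * Db \<alpha> k j)"
  unfolding Db_comb_def using assms
  by (simp add: if_distrib[of "\<lambda>x. x * _"] sum.delta cong: if_cong)

lemma D_lattice_iff:
  "x \<in> D_lattice n \<alpha> \<longleftrightarrow> (\<exists>c::nat \<Rightarrow> int. (\<forall>k>n. c k = 0) \<and> x = Db_comb n \<alpha> (\<lambda>k. of_int (c k)))"
proof
  assume "x \<in> D_lattice n \<alpha>"
  then obtain c :: "nat \<Rightarrow> int" where "x = Db_comb n \<alpha> (\<lambda>k. of_int (c k))"
    by (auto simp: D_lattice_def lattice_gen_def Db_comb_def)
  then show "\<exists>c::nat \<Rightarrow> int. (\<forall>k>n. c k = 0) \<and> x = Db_comb n \<alpha> (\<lambda>k. of_int (c k))"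
    by (intro exI[of _ "\<lambda>k. if k \<le> n then c k else 0"]) (auto intro: Db_comb_cong)
qed (auto simp: D_lattice_def lattice_gen_def Db_comb_def)

lemma D_lattice_nonzero_obtain:
  assumes "x \<in> D_lattice n \<alpha>" "x \<noteq> (\<lambda>_. 0)"
  obtains c :: "nat \<Rightarrow> int" and k
  where "\<forall>k>n. c k = 0" "x = Db_comb n \<alpha> (\<lambda>k. of_int (c k))" "k \<in> {1..n}" "c k \<noteq> 0"
proof -
  obtain c :: "nat \<Rightarrow> int" where c: "\<forall>k>n. c k = 0" "x = Db_comb n \<alpha> (\<lambda>k. of_int (c k))"
    using assms(1) D_lattice_iff by blast
  moreover have "\<exists>k\<in>{1..n}. c k \<noteq> 0"
  proof (rule ccontr)
    assume "\<not> (\<exists>k\<in>{1..n}. c k \<noteq> 0)"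
    then have "x = Db_comb n \<alpha> (\<lambda>_. 0)"
      unfolding c(2) by (intro Db_comb_cong) auto
    then show False
      using assms(2) by (simp add: Db_comb_def)
  qed
  ultimately show ?thesis
    using that by blast
qed

lemma one_le_power2_int: "(x::int) \<noteq> 0 \<Longrightarrow> 1 \<le> x\<^sup>2"
  using zero_less_power2[of x] by linarith

lemma one_le_sum_sq_int:
  fixes c :: "nat \<Rightarrow> int"
  assumes "k \<in> A" "finite A" "c k \<noteq> 0"
  shows "1 \<le> (\<Sum>i\<in>A. (c i)\<^sup>2)"
proof -
  have "1 \<le> (c k)\<^sup>2"
    using assms(3) by (rule one_le_power2_int)
  also have "\<dots> \<le> (\<Sum>i\<in>A. (c i)\<^sup>2)"
    using assms by (intro member_le_sum) auto
  finally show ?thesis .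
qed

lemma sum_sq_int_eq_1_imp:
  fixes c :: "nat \<Rightarrow> int"
  assumes "k \<in> A" "finite A" "c k \<noteq> 0" "(\<Sum>i\<in>A. (c i)\<^sup>2) = 1"
  shows "\<bar>c k\<bar> = 1" "\<And>i. i \<in> A \<Longrightarrow> i \<noteq> k \<Longrightarrow> c i = 0"
proof -
  have split: "(\<Sum>i\<in>A. (c i)\<^sup>2) = (c k)\<^sup>2 + (\<Sum>i\<in>A - {k}. (c i)\<^sup>2)"
    using assms(1,2) by (simp add: sum.remove)
  have "1 \<le> (c k)\<^sup>2"
    using assms(3) by (rule one_le_power2_int)
  moreover have "0 \<le> (\<Sum>i\<in>A - {k}. (c i)\<^sup>2)"
    by (simp add: sum_nonneg)
  ultimately have ck: "(c k)\<^sup>2 = 1" and rest: "(\<Sum>i\<in>A - {k}. (c i)\<^sup>2) = 0"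
    using split assms(4) by linarith+
  show "\<bar>c k\<bar> = 1"
    using ck by (auto simp: power2_eq_1_iff)
  show "c i = 0" if "i \<in> A" "i \<noteq> k" for i
    using rest that assms(2) by (simp add: sum_nonneg_eq_0_iff)
qed

context
  fixes n :: nat and \<alpha> :: real
  assumes n: "3 \<le> n" and \<alpha>: "1 < \<alpha>" "\<alpha>\<^sup>2 \<le> 2"
begin

lemma D_lattice_norm_sq_ge_2:
  assumes "x \<in> D_lattice n \<alpha>" "x \<noteq> (\<lambda>_. 0)"
  shows "2 \<le> (vnorm n x)\<^sup>2"
proof -
  obtain c :: "nat \<Rightarrow> int" and k where c: "\<forall>k>n. c k = 0" "x = Db_comb n \<alpha> (\<lambda>k. of_int (c k))"
    and k: "k \<in> {1..n}" "c k \<noteq> 0"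
    using D_lattice_nonzero_obtain[OF assms] .
  have "0 \<le> 2 * (1 - \<alpha> * abar \<alpha>) * ((\<Sum>k=1..n. (of_int (c k))\<^sup>2) - 1)"
    using alpha_mult_abar_less_one[OF \<alpha>] one_le_sum_sq_int[of k "{1..n}" c] k
    by (simp flip: of_int_power of_int_sum)
  then show ?thesis
    using sum_sq_Db_comb_int_ge[OF n c(1) \<alpha>, of k] k c(2) by (simp add: vnorm_sq)
qed

lemma D_lattice_norm_sq_eq_2_imp:
  assumes "x \<in> D_lattice n \<alpha>" "x \<noteq> (\<lambda>_. 0)" "(vnorm n x)\<^sup>2 = 2"
  shows "\<exists>k\<in>{1..n}. x = Db \<alpha> k \<or> x = (\<lambda>j. - Db \<alpha> k j)"
proof -
  obtain c :: "nat \<Rightarrow> int" and k where c: "\<forall>k>n. c k = 0" "x = Db_comb n \<alpha> (\<lambda>k. of_int (c k))"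
    and k: "k \<in> {1..n}" "c k \<noteq> 0"
    using D_lattice_nonzero_obtain[OF assms(1,2)] .
  have "2 * (1 - \<alpha> * abar \<alpha>) * ((\<Sum>k=1..n. (of_int (c k))\<^sup>2) - 1) \<le> 0"
    using sum_sq_Db_comb_int_ge[OF n c(1) \<alpha>, of k] k assms(3) c(2) by (simp add: vnorm_sq)
  then have "of_int (\<Sum>k=1..n. (c k)\<^sup>2) \<le> (1::real)"
    using alpha_mult_abar_less_one[OF \<alpha>] by (simp add: mult_le_0_iff)
  then have "(\<Sum>k=1..n. (c k)\<^sup>2) \<le> 1"
    by (simp flip: of_int_power of_int_sum)
  moreover have "1 \<le> (\<Sum>k=1..n. (c k)\<^sup>2)"
    using one_le_sum_sq_int[of k "{1..n}" c] k by simp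
  ultimately have "(\<Sum>k=1..n. (c k)\<^sup>2) = 1"
    by linarith
  then have unit: "\<bar>c k\<bar> = 1" "\<forall>i\<in>{1..n}. i \<noteq> k \<longrightarrow> c i = 0"
    using sum_sq_int_eq_1_imp[of k "{1..n}" c, OF k(1) _ k(2)] by blast+
  have "x = Db_comb n \<alpha> (\<lambda>i. if i = k then of_int (c k) else 0)"
    unfolding c(2) by (rule Db_comb_cong) (use unit(2) in auto)
  also have "\<dots> = (\<lambda>j. of_int (c k) * Db \<alpha> k j)"
    by (rule Db_comb_delta[OF k(1)])
  finally have x: "x = (\<lambda>j. of_int (c k) * Db \<alpha> k j)" .
  from unit(1) have "c k = 1 \<or> c k = -1"
    by linarith
  then have "x = Db \<alpha> k \<or> x = (\<lambda>j. - Db \<alpha> k j)"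
    using x by auto
  then show ?thesis
    using k(1) by blast
qed

end

lemma vnorm_uminus: "vnorm n (\<lambda>j. - x j) = vnorm n x"
  by (simp add: vnorm_def)

lemma sum_sq_two_coords:
  fixes p q :: nat
  assumes "p \<in> {1..n}" "q \<in> {1..n}" "p \<noteq> q"
  shows "(\<Sum>j=1..n. (u * stdb p j + v * stdb q j)\<^sup>2) = u\<^sup>2 + v\<^sup>2"
proof -
  have "(\<Sum>j=1..n. (u * stdb p j + v * stdb q j)\<^sup>2)
      = (\<Sum>j=1..n. (if j = p then u\<^sup>2 else 0) + (if j = q then v\<^sup>2 else 0))"
    using assms(3) by (intro sum.cong) (auto simp: stdb_def)
  also have "\<dots> = u\<^sup>2 + v\<^sup>2"
    using assms by (simp add: sum.distrib)
  finally show ?thesis .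
qed

lemma Db_two_coords:
  assumes "3 \<le> n" "k \<in> {1..n}"
  obtains p q u v where "p \<in> {1..n}" "q \<in> {1..n}" "p \<noteq> q" "u\<^sup>2 + v\<^sup>2 = \<alpha>\<^sup>2 + (abar \<alpha>)\<^sup>2"
    "Db \<alpha> k = (\<lambda>j. u * stdb p j + v * stdb q j)"
proof (cases k rule: nat_le4_cases)
  case 2
  then show ?thesis
    using assms by (intro that[of 1 2 \<alpha> "abar \<alpha>"]) (auto simp: Db_def)
next
  case 3
  then show ?thesis
    using assms by (intro that[of 2 3 \<alpha> "abar \<alpha>"]) (auto simp: Db_def)
next
  case 4
  then show ?thesis
    using assms by (intro that[of 1 3 "abar \<alpha>" \<alpha>]) (auto simp: Db_def)
next
  case 5
  then show ?thesis
    using assms by (intro that[of 3 4 "abar \<alpha>" "- \<alpha>"]) (auto simp: Db_def)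
next
  case 6
  then show ?thesis
    using assms by (intro that[of "k - 1" k "abar \<alpha>" "- \<alpha>"]) (auto simp: Db_def)
qed (use assms in simp)

lemma vnorm_Db:
  assumes "3 \<le> n" "k \<in> {1..n}" "\<alpha>\<^sup>2 \<le> 2"
  shows "vnorm n (Db \<alpha> k) = sqrt 2"
proof -
  obtain p q u v where pq: "p \<in> {1..n}" "q \<in> {1..n}" "p \<noteq> q"
    and uv: "u\<^sup>2 + v\<^sup>2 = \<alpha>\<^sup>2 + (abar \<alpha>)\<^sup>2" and Db: "Db \<alpha> k = (\<lambda>j. u * stdb p j + v * stdb q j)"
    using Db_two_coords[OF assms(1,2)] .
  show ?thesis
    unfolding vnorm_def Db sum_sq_two_coords[OF pq] uv alpha_sq_add_abar_sq[OF assms(3)] ..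
qed

lemma signed_Db_in_D_lattice:
  assumes "k \<in> {1..n}"
  shows "(\<lambda>j. of_int s * Db \<alpha> k j) \<in> D_lattice n \<alpha>"
proof -
  have "(\<lambda>j. of_int s * Db \<alpha> k j) = Db_comb n \<alpha> (\<lambda>i. of_int (if i = k then s else 0))"
    using Db_comb_delta[OF assms, of \<alpha> "of_int s"] by (simp add: if_distrib[of of_int] cong: if_cong)
  then show ?thesis
    unfolding D_lattice_iff by (intro exI[of _ "\<lambda>i. if i = k then s else 0"]) (use assms in auto)
qed

section \<open>Counting and spanning\<close>

lemma abs_Db_diag: "0 < k \<Longrightarrow> 0 \<le> \<alpha> \<Longrightarrow> \<bar>Db \<alpha> k k\<bar> = \<alpha>"
  by (cases k rule: nat_le4_cases) (auto simp: Db_def stdb_def)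

lemma abs_Db_off_diag: "k \<noteq> l \<Longrightarrow> \<alpha>\<^sup>2 \<le> 2 \<Longrightarrow> \<bar>Db \<alpha> l k\<bar> \<le> abar \<alpha>"
  by (cases l rule: nat_le4_cases) (auto simp: Db_def stdb_def abar_nonneg)

lemma signed_Db_eq_imp:
  assumes \<alpha>: "1 < \<alpha>" "\<alpha>\<^sup>2 \<le> 2" and "0 < k" and st: "\<bar>s\<bar> = 1" "\<bar>t\<bar> = 1"
    and eq: "(\<lambda>j. s * Db \<alpha> k j) = (\<lambda>j. t * Db \<alpha> l j)"
  shows "k = l" "s = t"
proof -
  have diag: "s * Db \<alpha> k k = t * Db \<alpha> l k"
    using fun_cong[OF eq, of k] .
  have diag_abs: "\<bar>Db \<alpha> k k\<bar> = \<alpha>"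
    using assms(3) \<alpha>(1) by (intro abs_Db_diag) auto
  show "k = l"
  proof (rule ccontr)
    assume "k \<noteq> l"
    then have "\<bar>Db \<alpha> l k\<bar> < \<alpha>"
      using abs_Db_off_diag[OF _ \<alpha>(2)] abar_less_one[OF \<alpha>] \<alpha>(1) by (smt (verit))
    then show False
      using arg_cong[OF diag, of abs] diag_abs st by (simp add: abs_mult)
  qed
  then show "s = t"
    using diag diag_abs \<alpha>(1) by auto
qed

lemma card_signed_Db:
  assumes "1 < \<alpha>" "\<alpha>\<^sup>2 \<le> 2"
  shows "card ({Db \<alpha> k | k. k \<in> {1..n}} \<union> {(\<lambda>j. - Db \<alpha> k j) | k. k \<in> {1..n}}) = 2 * n"
proof -
  let ?f = "\<lambda>(k, s) j. s * Db \<alpha> k j"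
  have "{Db \<alpha> k | k. k \<in> {1..n}} \<union> {(\<lambda>j. - Db \<alpha> k j) | k. k \<in> {1..n}} = ?f ` ({1..n} \<times> {1, -1})"
    (is "?L = ?R")
  proof
    show "?R \<subseteq> ?L"
      by auto
    show "?L \<subseteq> ?R"
    proof
      fix x assume "x \<in> ?L"
      then obtain k where "k \<in> {1..n}" "x = Db \<alpha> k \<or> x = (\<lambda>j. - Db \<alpha> k j)"
        by blast
      then show "x \<in> ?R"
        by (auto intro: rev_image_eqI[of "(k, 1)"] rev_image_eqI[of "(k, -1)"])
    qed
  qed
  moreover have "inj_on ?f ({1..n} \<times> {1, -1})"
  proof (rule inj_onI)
    fix x y assume xy: "x \<in> {1..n} \<times> {1, -1}" "y \<in> {1..n} \<times> {1, -1}" "?f x = ?f y"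
    obtain k s l t where x: "x = (k, s)" and y: "y = (l, t)"
      by fastforce
    have "0 < k" "\<bar>s\<bar> = 1" "\<bar>t\<bar> = 1"
      using xy(1,2) unfolding x y by auto
    moreover have "(\<lambda>j. s * Db \<alpha> k j) = (\<lambda>j. t * Db \<alpha> l j)"
      using xy(3) unfolding x y by simp
    ultimately show "x = y"
      unfolding x y using signed_Db_eq_imp[OF assms] by blast
  qed
  ultimately show ?thesis
    by (simp add: card_image card_cartesian_product)
qed

interpretation fun_module: module "\<lambda>(c::real) (f::nat \<Rightarrow> real) j. c * f j"
  by unfold_locales (simp_all add: fun_eq_iff algebra_simps)

lemma sum_fun_apply: "(\<Sum>a\<in>A. f a) x = (\<Sum>a\<in>A. f a x)"
  by (induction A rule: infinite_finite_induct) auto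

lemma spans_Rn_if_in_span:
  assumes "\<And>x. in_Rn n x \<Longrightarrow> x \<in> fun_module.span S"
  shows "spans_Rn n S"
  unfolding spans_Rn_def
proof (intro allI impI)
  fix x assume "in_Rn n x"
  then obtain F c where "finite F" "F \<subseteq> S" "x = (\<Sum>v\<in>F. (\<lambda>j. c v * v j))"
    using assms unfolding fun_module.span_explicit by blast
  then show "\<exists>F c. finite F \<and> F \<subseteq> S \<and> x = (\<lambda>j. \<Sum>v\<in>F. c v * v j)"
    by (auto simp: fun_eq_iff sum_fun_apply)
qed

lemma in_span_if_in_Rn:
  assumes "\<And>m. m \<in> {1..n} \<Longrightarrow> stdb m \<in> fun_module.span S" and "in_Rn n x"
  shows "x \<in> fun_module.span S"
proof -
  have "x = (\<Sum>m\<in>{1..n}. (\<lambda>j. x m * stdb m j))"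
    using assms(2) by (auto simp: fun_eq_iff sum_fun_apply stdb_def in_Rn_def if_distrib[of "\<lambda>u. _ * u"] cong: if_cong)
  also have "\<dots> \<in> fun_module.span S"
    using assms(1) by (intro fun_module.span_sum fun_module.span_scale[of _ _ "x _", simplified])
  finally show ?thesis .
qed

lemma span_circulant:
  fixes a b :: real and S :: "(nat \<Rightarrow> real) set"
  assumes "a ^ 3 + b ^ 3 \<noteq> 0"
    and "(\<lambda>j. a * u1 j + b * u2 j) \<in> fun_module.span S"
    and "(\<lambda>j. a * u2 j + b * u3 j) \<in> fun_module.span S"
    and "(\<lambda>j. a * u3 j + b * u1 j) \<in> fun_module.span S"
  shows "u1 \<in> fun_module.span S"
proof -
  let ?D = "a ^ 3 + b ^ 3"
  have "(\<lambda>j. a\<^sup>2 * (a * u1 j + b * u2 j)) + (\<lambda>j. (- (a * b)) * (a * u2 j + b * u3 j))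
      + (\<lambda>j. b\<^sup>2 * (a * u3 j + b * u1 j)) \<in> fun_module.span S"
    using assms(2-4) by (intro fun_module.span_add fun_module.span_scale[simplified])
  moreover have "(\<lambda>j. a\<^sup>2 * (a * u1 j + b * u2 j)) + (\<lambda>j. (- (a * b)) * (a * u2 j + b * u3 j))
      + (\<lambda>j. b\<^sup>2 * (a * u3 j + b * u1 j)) = (\<lambda>j. ?D * u1 j)"
    by (simp add: fun_eq_iff) algebra
  ultimately have "(\<lambda>j. (1 / ?D) * (?D * u1 j)) \<in> fun_module.span S"
    using fun_module.span_scale[of "\<lambda>j. ?D * u1 j" S "1 / ?D"] by simp
  then show ?thesis
    using assms(1) by simp
qed

lemma stdb_in_span_Db:
  assumes n: "3 \<le> n" and \<alpha>: "1 < \<alpha>" "\<alpha>\<^sup>2 \<le> 2" and m: "m \<in> {1..n}"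
  shows "stdb m \<in> fun_module.span (Db \<alpha> ` {1..n})"
proof -
  let ?V = "fun_module.span (Db \<alpha> ` {1..n})"
  define b where "b = abar \<alpha>"
  have Db: "k \<in> {1..n} \<Longrightarrow> Db \<alpha> k \<in> ?V" for k
    by (intro fun_module.span_base) auto
  have b1: "(\<lambda>j. \<alpha> * stdb 1 j + b * stdb 2 j) \<in> ?V"
    using Db[of 1] n by (simp add: Db_def b_def)
  have b2: "(\<lambda>j. \<alpha> * stdb 2 j + b * stdb 3 j) \<in> ?V"
    using Db[of 2] n by (simp add: Db_def b_def)
  have b3: "(\<lambda>j. \<alpha> * stdb 3 j + b * stdb 1 j) \<in> ?V"
    using Db[of 3] n by (simp add: Db_def b_def add.commute)
  have "0 < \<alpha> ^ 3 + b ^ 3"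
    using \<alpha>(1) abar_nonneg[OF \<alpha>(2)] by (simp add: b_def add_pos_nonneg)
  then have D: "\<alpha> ^ 3 + b ^ 3 \<noteq> 0"
    by simp
  have first3: "stdb 1 \<in> ?V" "stdb 2 \<in> ?V" "stdb 3 \<in> ?V"
    using span_circulant[OF D b1 b2 b3] span_circulant[OF D b2 b3 b1] span_circulant[OF D b3 b1 b2] .
  have from3: "stdb m \<in> ?V" if "3 \<le> m" "m \<le> n" for m
    using that
  proof (induction m rule: nat_induct_at_least)
    case base
    then show ?case using first3 by simp
  next
    case (Suc m)
    have "(\<lambda>j. (b / \<alpha>) * stdb m j) + (\<lambda>j. (- 1 / \<alpha>) * Db \<alpha> (Suc m) j) \<in> ?V"
      using Suc Db[of "Suc m"] by (intro fun_module.span_add fun_module.span_scale[simplified]) auto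
    moreover have "(\<lambda>j. (b / \<alpha>) * stdb m j) + (\<lambda>j. (- 1 / \<alpha>) * Db \<alpha> (Suc m) j) = stdb (Suc m)"
      using Suc(1) \<alpha>(1) by (auto simp: fun_eq_iff Db_def stdb_def b_def field_simps)
    ultimately show ?case
      by simp
  qed
  show ?thesis
  proof (cases "3 \<le> m")
    case False
    with m have "m = 1 \<or> m = 2"
      by auto
    with first3 show ?thesis
      by auto
  qed (use m from3 in auto)
qed

context
  fixes n :: nat and \<alpha> :: real
  assumes n: "3 \<le> n" and \<alpha>: "1 < \<alpha>" "\<alpha>\<^sup>2 \<le> 2"
begin

lemma signed_Db_minimal:
  assumes "k \<in> {1..n}" "x = Db \<alpha> k \<or> x = (\<lambda>j. - Db \<alpha> k j)"
  shows "x \<in> D_lattice n \<alpha>" "x \<noteq> (\<lambda>_. 0)" "vnorm n x = sqrt 2"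
proof -
  have "Db \<alpha> k \<in> D_lattice n \<alpha>"
    using signed_Db_in_D_lattice[OF assms(1), of 1 \<alpha>] by simp
  moreover have "(\<lambda>j. - Db \<alpha> k j) \<in> D_lattice n \<alpha>"
    using signed_Db_in_D_lattice[OF assms(1), of "-1" \<alpha>] by simp
  ultimately show "x \<in> D_lattice n \<alpha>"
    using assms(2) by blast
  show "vnorm n x = sqrt 2"
    using assms(2) vnorm_Db[OF n assms(1) \<alpha>(2)] by (elim disjE) (simp_all add: vnorm_uminus)
  then show "x \<noteq> (\<lambda>_. 0)"
    by (auto simp: vnorm_def)
qed

lemma lambda1_D_lattice: "lambda1 n (D_lattice n \<alpha>) = sqrt 2"
  unfolding lambda1_def
proof (rule cInf_eq_minimum)
  have "1 \<in> {1..n}"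
    using n by simp
  then have "Db \<alpha> 1 \<in> D_lattice n \<alpha>" "Db \<alpha> 1 \<noteq> (\<lambda>_. 0)" "vnorm n (Db \<alpha> 1) = sqrt 2"
    using signed_Db_minimal[of 1 "Db \<alpha> 1"] by simp_all
  then show "sqrt 2 \<in> {vnorm n x |x. x \<in> D_lattice n \<alpha> \<and> x \<noteq> (\<lambda>_. 0)}"
    by (intro CollectI exI[of _ "Db \<alpha> 1"]) simp
next
  fix y assume "y \<in> {vnorm n x |x. x \<in> D_lattice n \<alpha> \<and> x \<noteq> (\<lambda>_. 0)}"
  then obtain x where "y = vnorm n x" "x \<in> D_lattice n \<alpha>" "x \<noteq> (\<lambda>_. 0)"
    by blast
  then show "sqrt 2 \<le> y"
    using D_lattice_norm_sq_ge_2[OF n \<alpha>] vnorm_nonneg by (simp add: real_le_lsqrt)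
qed

lemma minvecs_D_lattice:
  "minvecs n (D_lattice n \<alpha>) = {Db \<alpha> k | k. k \<in> {1..n}} \<union> {(\<lambda>j. - Db \<alpha> k j) | k. k \<in> {1..n}}"
proof (intro equalityI subsetI)
  fix x assume "x \<in> minvecs n (D_lattice n \<alpha>)"
  then have "x \<in> D_lattice n \<alpha>" "x \<noteq> (\<lambda>_. 0)" "(vnorm n x)\<^sup>2 = 2"
    by (simp_all add: minvecs_def lambda1_D_lattice)
  then show "x \<in> {Db \<alpha> k | k. k \<in> {1..n}} \<union> {(\<lambda>j. - Db \<alpha> k j) | k. k \<in> {1..n}}"
    using D_lattice_norm_sq_eq_2_imp[OF n \<alpha>] by blast
next
  fix x assume "x \<in> {Db \<alpha> k | k. k \<in> {1..n}} \<union> {(\<lambda>j. - Db \<alpha> k j) | k. k \<in> {1..n}}"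
  then obtain k where "k \<in> {1..n}" "x = Db \<alpha> k \<or> x = (\<lambda>j. - Db \<alpha> k j)"
    by blast
  then show "x \<in> minvecs n (D_lattice n \<alpha>)"
    using signed_Db_minimal by (simp add: minvecs_def lambda1_D_lattice)
qed

lemma spans_Rn_minvecs: "spans_Rn n (minvecs n (D_lattice n \<alpha>))"
proof (rule spans_Rn_if_in_span)
  have "Db \<alpha> ` {1..n} \<subseteq> minvecs n (D_lattice n \<alpha>)"
    unfolding minvecs_D_lattice by blast
  then have "stdb m \<in> fun_module.span (minvecs n (D_lattice n \<alpha>))" if "m \<in> {1..n}" for m
    using fun_module.span_mono stdb_in_span_Db[OF n \<alpha> that] by blast
  then show "x \<in> fun_module.span (minvecs n (D_lattice n \<alpha>))" if "in_Rn n x" for x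
    using in_span_if_in_Rn that by blast
qed

end

theorem mainTheorem15:
  fixes n :: nat and \<alpha> :: real
  assumes "n \<ge> 3" and "1 < \<alpha>" and "\<alpha> \<le> sqrt 2"
  shows "minvecs n (D_lattice n \<alpha>) = {Db \<alpha> k | k. k \<in> {1..n}} \<union> {(\<lambda>j. - Db \<alpha> k j) | k. k \<in> {1..n}}
         \<and> (lambda1 n (D_lattice n \<alpha>))^2 = 2
         \<and> generic_WR n (D_lattice n \<alpha>)"
proof -
  have \<alpha>: "1 < \<alpha>" "\<alpha>\<^sup>2 \<le> 2"
    using assms(2,3) sq_le_two_if_le_sqrt2 by auto
  show ?thesis
    using minvecs_D_lattice[OF assms(1) \<alpha>] lambda1_D_lattice[OF assms(1) \<alpha>]
      spans_Rn_minvecs[OF assms(1) \<alpha>] card_signed_Db[OF \<alpha>, of n]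
    by (simp add: generic_WR_def)
qed

end
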